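(* Fix $n\ge1$. For $\theta>0$ let $X_{1,n}$ be a random variable on $\{1,\dots,n\}$ with $$P\{X_{1,n}=k\}=\frac\theta n\,\frac{n!}{(n-k)!}\,\frac{\Gamma(\theta+n-k)}{\Gamma(\theta+n)},\quad k=1,\dots,n.$$ Then, as $\theta\to\infty$, the family of laws of $X_{1,n}$ satisfies an LDP on $\{1,\dots,n\}$ with speed $\log\theta$ and rate function $I(k)=k-1$.
   Context: $X_{1,n}$ is the size of the first (oldest) age class in a random sample of size $n$ from a $PD(\theta)$ population; the displayed formula is its law. An LDP with speed $\log\theta$ uses normalization $(\log\theta)^{-1}\log$ as $\theta\to\infty$. *)

theory Defs
  imports "HOL-Analysis.Analysis"
begin

text \<open>Law of the size of the oldest age class X_{1,n} in a sample of size n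
  from a PD(theta) population, given by its probability mass function on {1..n}.\<close>
definition first_age_class_pmf :: "nat \<Rightarrow> real \<Rightarrow> nat \<Rightarrow> real" where
  "first_age_class_pmf n \<theta> k =
     \<theta> / real n * (fact n / fact (n - k)) * (Gamma (\<theta> + real n - real k) / Gamma (\<theta> + real n))"

text \<open>In the discrete
  topology every subset of S is both open and closed, so the LDP upper bound
  (closed sets) and lower bound (open sets) are required for every subset A of S.
  For A empty both bounds are trivial (log 0 = -infinity, inf over empty = +infinity),
  so only nonempty A are listed.  The rate function takes values in [0, infinity);
  lower semicontinuity and compactness of level sets are automatic here.\<close>
definition ldp_finite_discrete ::
  "'a set \<Rightarrow> (real \<Rightarrow> 'a \<Rightarrow> real) \<Rightarrow> (real \<Rightarrow> real) \<Rightarrow> ('a \<Rightarrow> real) \<Rightarrow> bool" where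
  "ldp_finite_discrete S p v I \<longleftrightarrow>
     (\<forall>x\<in>S. 0 \<le> I x) \<and>
     (\<forall>A. A \<subseteq> S \<and> A \<noteq> {} \<longrightarrow>
        Limsup at_top (\<lambda>\<theta>. ereal (ln (\<Sum>x\<in>A. p \<theta> x) / v \<theta>)) \<le> ereal (- Min (I ` A)) \<and>
        Liminf at_top (\<lambda>\<theta>. ereal (ln (\<Sum>x\<in>A. p \<theta> x) / v \<theta>)) \<ge> ereal (- Min (I ` A)))"

end

theory Submission
  imports Defs "HOL-Real_Asymp.Real_Asymp"
begin

text \<open>The Gamma ratio in the mass function is a Pochhammer symbol of length k, so
  P{X = k} behaves like c_k theta^(1-k) with c_k > 0. For a set A of sizes, P{X in A}
  is therefore dominated by the term of its smallest element m, and
  log P{X in A} / log theta converges to 1 - m = - min_A I. Since the limit exists,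
  the LDP upper and lower bounds both hold.\<close>

lemma ldp_finite_discrete_if_tendsto:
  assumes "\<And>x. x \<in> S \<Longrightarrow> 0 \<le> I x"
    and "\<And>A. A \<subseteq> S \<Longrightarrow> A \<noteq> {} \<Longrightarrow>
           ((\<lambda>\<theta>. ln (\<Sum>x\<in>A. p \<theta> x) / v \<theta>) \<longlongrightarrow> - Min (I ` A)) at_top"
  shows "ldp_finite_discrete S p v I"
  unfolding ldp_finite_discrete_def
proof (intro conjI allI impI ballI)
  fix A assume A: "A \<subseteq> S \<and> A \<noteq> {}"
  have lim: "((\<lambda>\<theta>. ereal (ln (\<Sum>x\<in>A. p \<theta> x) / v \<theta>)) \<longlongrightarrow> ereal (- Min (I ` A))) at_top"
    using assms(2) A by (simp add: tendsto_ereal)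
  show "Limsup at_top (\<lambda>\<theta>. ereal (ln (\<Sum>x\<in>A. p \<theta> x) / v \<theta>)) \<le> ereal (- Min (I ` A))"
    and "Liminf at_top (\<lambda>\<theta>. ereal (ln (\<Sum>x\<in>A. p \<theta> x) / v \<theta>)) \<ge> ereal (- Min (I ` A))"
    using lim_imp_Limsup[OF _ lim] lim_imp_Liminf[OF _ lim] by simp_all
qed (use assms(1) in auto)

lemma powr_diff_Min_tendsto:
  fixes m e :: real
  assumes "m \<le> e"
  shows "((\<lambda>x::real. x powr (m - e)) \<longlongrightarrow> (if e = m then 1 else 0)) at_top"
proof (cases "e = m")
  case True
  have "eventually (\<lambda>x::real. 1 = x powr (m - e)) at_top"
    using eventually_gt_at_top[of 0] by eventually_elim (simp add: True)
  then show ?thesis using True by (simp add: tendsto_cong)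
next
  case False
  then show ?thesis using assms by (simp add: tendsto_neg_powr filterlim_ident)
qed

text \<open>The positivity of the constants c k rules out cancellation among the leading terms.\<close>
lemma ln_sum_over_ln_tendsto_neg_Min:
  fixes f :: "'a \<Rightarrow> real \<Rightarrow> real" and e c :: "'a \<Rightarrow> real"
  assumes A: "finite A" "A \<noteq> {}"
    and f: "\<And>k. k \<in> A \<Longrightarrow> ((\<lambda>x. f k x * x powr e k) \<longlongrightarrow> c k) at_top"
    and c: "\<And>k. k \<in> A \<Longrightarrow> c k > 0"
  shows "((\<lambda>x. ln (\<Sum>k\<in>A. f k x) / ln x) \<longlongrightarrow> - Min (e ` A)) at_top"
proof -
  define m where "m = Min (e ` A)"
  define L where "L = (\<Sum>k\<in>A. c k * (if e k = m then 1 else 0))"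
  define g where "g x = (\<Sum>k\<in>A. f k x) * x powr m" for x
  have "m \<in> e ` A"
    using A by (simp add: m_def)
  then obtain k0 where k0: "k0 \<in> A" "e k0 = m"
    by auto
  have L_pos: "L > 0"
    unfolding L_def using A c k0 by (intro sum_pos2[of A k0]) (auto intro: less_imp_le)
  have "((\<lambda>x. f k x * x powr e k * x powr (m - e k)) \<longlongrightarrow> c k * (if e k = m then 1 else 0)) at_top"
    if "k \<in> A" for k
  proof -
    have "m \<le> e k"
      using A that by (simp add: m_def)
    from tendsto_mult[OF f[OF that] powr_diff_Min_tendsto[OF this]] show ?thesis .
  qed
  then have "((\<lambda>x. \<Sum>k\<in>A. f k x * x powr e k * x powr (m - e k)) \<longlongrightarrow> L) at_top"
    unfolding L_def by (rule tendsto_sum)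
  moreover have "eventually (\<lambda>x. (\<Sum>k\<in>A. f k x * x powr e k * x powr (m - e k)) = g x) at_top"
    using eventually_gt_at_top[of 0]
    by eventually_elim (simp add: g_def sum_distrib_right mult.assoc powr_add[symmetric])
  ultimately have g: "(g \<longlongrightarrow> L) at_top"
    by (simp add: tendsto_cong)
  have "((\<lambda>x. ln (g x) / ln x - m) \<longlongrightarrow> 0 - m) at_top"
    using L_pos
    by (intro tendsto_diff tendsto_const tendsto_divide_0[OF tendsto_ln[OF g]]
          filterlim_at_top_imp_at_infinity ln_at_top) auto
  moreover have "eventually (\<lambda>x. ln (g x) / ln x - m = ln (\<Sum>k\<in>A. f k x) / ln x) at_top"
    using eventually_gt_at_top[of 1] order_tendstoD(1)[OF g L_pos]
  proof eventually_elim
    case (elim x)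
    then have "(\<Sum>k\<in>A. f k x) > 0"
      by (simp add: g_def zero_less_mult_iff)
    then have "ln (g x) = ln (\<Sum>k\<in>A. f k x) + m * ln x"
      using elim by (simp add: g_def ln_mult ln_powr)
    then show ?case
      using elim by (simp add: field_simps)
  qed
  ultimately show ?thesis
    by (simp add: m_def tendsto_cong)
qed

lemma first_age_class_pmf_pochhammer:
  assumes "\<theta> > 0" "k \<le> n"
  shows "first_age_class_pmf n \<theta> k =
           \<theta> / real n * (fact n / fact (n - k)) / pochhammer (\<theta> + real n - real k) k"
proof -
  have "\<theta> + real n - real k \<notin> \<int>\<^sub>\<le>\<^sub>0"
    using assms by (auto elim!: nonpos_Ints_cases)
  from pochhammer_Gamma[OF this, of k] show ?thesis
    by (simp add: first_age_class_pmf_def)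
qed

lemma power_over_pochhammer_tendsto_1:
  "((\<lambda>\<theta>::real. \<theta> ^ k / pochhammer (\<theta> + c) k) \<longlongrightarrow> 1) at_top"
proof -
  have "((\<lambda>\<theta>::real. \<Prod>i<k. \<theta> / (\<theta> + c + real i)) \<longlongrightarrow> (\<Prod>i<k. 1)) at_top"
    by (intro tendsto_prod) real_asymp
  then show ?thesis
    by (simp add: pochhammer_prod lessThan_atLeast0 prod_dividef)
qed

lemma first_age_class_pmf_asymp:
  assumes "1 \<le> k" "k \<le> n"
  shows "((\<lambda>\<theta>. first_age_class_pmf n \<theta> k * \<theta> powr (real k - 1))
           \<longlongrightarrow> fact n / (real n * fact (n - k))) at_top"
proof -
  have "((\<lambda>\<theta>. fact n / (real n * fact (n - k)) * (\<theta> ^ k / pochhammer (\<theta> + (real n - real k)) k))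
          \<longlongrightarrow> fact n / (real n * fact (n - k)) * 1) at_top"
    by (intro tendsto_mult tendsto_const power_over_pochhammer_tendsto_1)
  moreover have "eventually (\<lambda>\<theta>. fact n / (real n * fact (n - k)) *
                     (\<theta> ^ k / pochhammer (\<theta> + (real n - real k)) k)
                   = first_age_class_pmf n \<theta> k * \<theta> powr (real k - 1)) at_top"
    using eventually_gt_at_top[of "0::real"]
  proof eventually_elim
    case (elim \<theta>)
    have "\<theta> powr (real k - 1) = \<theta> ^ (k - 1)"
      using elim assms by (simp add: of_nat_diff powr_realpow[symmetric])
    moreover have "\<theta> ^ k = \<theta> * \<theta> ^ (k - 1)"
      using assms by (cases k) auto
    ultimately show ?case
      using elim assms by (simp add: first_age_class_pmf_pochhammer algebra_simps)
  qed
  ultimately show ?thesis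
    by (simp add: tendsto_cong)
qed

theorem theorem4p6:
  fixes n :: nat
  assumes "n \<ge> 1"
  shows "ldp_finite_discrete {1..n} (first_age_class_pmf n) (\<lambda>\<theta>. ln \<theta>) (\<lambda>k. real k - 1)"
proof (rule ldp_finite_discrete_if_tendsto)
  fix A assume A: "A \<subseteq> {1..n}" "A \<noteq> {}"
  then have "finite A"
    using finite_subset by blast
  with A show "((\<lambda>\<theta>. ln (\<Sum>k\<in>A. first_age_class_pmf n \<theta> k) / ln \<theta>)
                  \<longlongrightarrow> - Min ((\<lambda>k. real k - 1) ` A)) at_top"
    by (intro ln_sum_over_ln_tendsto_neg_Min[where c = "\<lambda>k. fact n / (real n * fact (n - k))"])
      (auto intro!: first_age_class_pmf_asymp)
qed auto

end
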